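(* Let $b\ge1$ be an integer, $t\ge0$ an integer and $d=2t+1$. Let $\nu^{\text{on-diag}}$ be the number of pairs $(k,q)$ with $k$ odd, $1\le k<d$, $0\le q\le k$, $q\equiv0\pmod{2b}$. Then $\nu^{\text{on-diag}}=\tfrac{t^2}{2b}+\tfrac{t}{2}+c$, where $c=\tfrac{1}{2b}[t]_b\big([t]_b-2[t-\tfrac12]_b+b-1\big)$, and $0\le c\le b$.
   Context: For real $x$ and positive integer $y$, $[x]_y:=x\bmod y=x-y\lfloor x/y\rfloor$. *)

theory Defs
  imports Complex_Main
begin

definition rmod :: "real \<Rightarrow> nat \<Rightarrow> real" where
  "rmod x y = x - real y * of_int \<lfloor>x / real y\<rfloor>"

end

theory Submission
  imports Defs
begin

text \<open>
  Grouping the pairs by their odd first entry \<open>k = 2j + 1\<close>, the column of \<open>k\<close> contains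
  \<open>\<lfloor>k / 2b\<rfloor> + 1 = \<lfloor>j / b\<rfloor> + 1\<close> multiples of \<open>2b\<close>, so the count is
  \<open>\<Sum>j<t. \<lfloor>j / b\<rfloor> + 1\<close>. With \<open>r = [t]\<^sub>b\<close>, induction on \<open>t\<close> gives
  \<open>2b \<Sum>j<t. (\<lfloor>j / b\<rfloor> + 1) = t\<^sup>2 + bt + r(b - r)\<close>. Finally \<open>[t - 1/2]\<^sub>b = r - 1/2\<close>
  unless \<open>r = 0\<close>, so \<open>c = r(b - r) / 2b\<close>, and \<open>0 \<le> c \<le> b\<close> is immediate.
\<close>

lemma card_multiples_atMost:
  fixes m k :: nat
  assumes "m > 0"
  shows "card {q. q \<le> k \<and> m dvd q} = k div m + 1"
proof -
  have "{q. q \<le> k \<and> m dvd q} = (\<lambda>i. m * i) ` {..k div m}"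
    using assms by (auto simp: less_eq_div_iff_mult_less_eq mult.commute)
  moreover have "inj_on (\<lambda>i. m * i) {..k div m}"
    using assms by (auto simp: inj_on_def)
  ultimately show ?thesis
    by (simp add: card_image)
qed

lemma card_odd_diagonal_pairs:
  fixes b t :: nat
  assumes "b > 0"
  shows "card {(k, q). odd k \<and> 1 \<le> k \<and> k < 2 * t + 1 \<and> q \<le> k \<and> (2 * b) dvd q}
           = (\<Sum>j<t. j div b + 1)"
proof -
  let ?Q = "\<lambda>k::nat. {q. q \<le> k \<and> (2 * b) dvd q}"
  have odd_below: "{k::nat. odd k \<and> 1 \<le> k \<and> k < 2 * t + 1} = (\<lambda>j. 2 * j + 1) ` {..<t}"
    by (auto elim!: oddE)
  have "{(k, q). odd k \<and> 1 \<le> k \<and> k < 2 * t + 1 \<and> q \<le> k \<and> (2 * b) dvd q}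
          = Sigma ((\<lambda>j. 2 * j + 1) ` {..<t}) ?Q"
    unfolding odd_below[symmetric] by auto
  then have "card {(k, q). odd k \<and> 1 \<le> k \<and> k < 2 * t + 1 \<and> q \<le> k \<and> (2 * b) dvd q}
               = (\<Sum>j<t. card (?Q (2 * j + 1)))"
    by (simp add: sum.reindex inj_on_def)
  also have "\<dots> = (\<Sum>j<t. j div b + 1)"
    using assms by (simp add: card_multiples_atMost div_mult2_eq)
  finally show ?thesis .
qed

lemma real_div_mult_mod_eq: "real (n div b) * real b + real (n mod b) = real n"
  by (metis div_mult_mod_eq of_nat_add of_nat_mult)

lemma sum_div_add_one_closed_form:
  fixes b t :: nat
  shows "2 * real b * (\<Sum>j<t. real (j div b) + 1)
           = real t ^ 2 + real b * real t + real (t mod b) * (real b - real (t mod b))"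
proof (induction t)
  case 0
  show ?case by simp
next
  case (Suc t)
  define m r where "m = t div b" and "r = t mod b"
  have t: "real t = real m * real b + real r"
    unfolding m_def r_def by (simp add: real_div_mult_mod_eq)
  have sum_Suc: "2 * real b * (\<Sum>j<Suc t. real (j div b) + 1)
                   = real t ^ 2 + real b * real t + real r * (real b - real r) + 2 * real b * (real m + 1)"
    using Suc.IH by (simp add: m_def r_def algebra_simps)
  show ?case
  proof (cases "Suc r = b")
    case True
    then have "Suc t mod b = 0"
      by (simp add: r_def mod_Suc)
    then show ?thesis
      unfolding sum_Suc by (simp add: t power2_eq_square algebra_simps flip: True)
  next
    case False
    then have "Suc t mod b = Suc r"
      by (simp add: r_def mod_Suc)
    then show ?thesis
      unfolding sum_Suc by (simp add: t power2_eq_square algebra_simps)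
  qed
qed

lemma rmod_eqI:
  fixes n :: int
  assumes "0 \<le> y" "y < real b" "x = of_int n * real b + y"
  shows "rmod x b = y"
proof -
  have "real b > 0"
    using assms(1,2) by linarith
  then have "\<lfloor>x / real b\<rfloor> = n"
    using assms by (intro floor_unique) (simp_all add: field_simps)
  then show ?thesis
    using assms(3) by (simp add: rmod_def)
qed

lemma rmod_of_nat:
  assumes "b > 0"
  shows "rmod (real n) b = real (n mod b)"
  using assms by (intro rmod_eqI[where n = "int (n div b)"]) (simp_all add: real_div_mult_mod_eq)

lemma rmod_of_nat_minus_half:
  assumes "b > 0"
  shows "rmod (real n - 1/2) b = (if n mod b = 0 then real b - 1/2 else real (n mod b) - 1/2)"
proof -
  have n: "real n = real (n div b) * real b + real (n mod b)"
    by (simp add: real_div_mult_mod_eq)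
  show ?thesis
  proof (cases "n mod b = 0")
    case True
    then show ?thesis
      using assms by (intro rmod_eqI[where n = "int (n div b) - 1"]) (simp_all add: n algebra_simps)
  next
    case False
    moreover have "n mod b < b"
      using assms by simp
    ultimately show ?thesis
      by (intro rmod_eqI[where n = "int (n div b)"]) (simp_all add: n)
  qed
qed

theorem lemmaS11:
  fixes b t d :: nat and c :: real
  assumes hb: "b \<ge> 1"
    and hd: "d = 2 * t + 1"
    and hc: "c = (1 / (2 * real b)) * rmod (real t) b *
                 (rmod (real t) b - 2 * rmod (real t - 1/2) b + real b - 1)"
  shows "real (card {(k::nat, q::nat). odd k \<and> 1 \<le> k \<and> k < d \<and> q \<le> k \<and> (2 * b) dvd q})
           = (real t)^2 / (2 * real b) + real t / 2 + c
         \<and> 0 \<le> c \<and> c \<le> real b"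
proof -
  define r where "r = t mod b"
  have "b > 0" "r < b"
    using hb by (simp_all add: r_def)
  have "rmod (real t) b = real r"
    using \<open>b > 0\<close> by (simp add: r_def rmod_of_nat)
  moreover have "r \<noteq> 0 \<Longrightarrow> rmod (real t - 1/2) b = real r - 1/2"
    using \<open>b > 0\<close> by (simp add: r_def rmod_of_nat_minus_half)
  ultimately have c: "c = real r * (real b - real r) / (2 * real b)"
    unfolding hc by (cases "r = 0") simp_all
  have "0 \<le> real r * (real b - real r)" "real r * (real b - real r) \<le> real b * (2 * real b)"
    using \<open>r < b\<close> by (auto intro: mult_mono)
  then have c_bounds: "0 \<le> c \<and> c \<le> real b"
    using \<open>b > 0\<close> by (simp add: c pos_divide_le_eq)
  have "real (card {(k, q). odd k \<and> 1 \<le> k \<and> k < d \<and> q \<le> k \<and> (2 * b) dvd q})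
          = (\<Sum>j<t. real (j div b) + 1)"
    unfolding hd card_odd_diagonal_pairs[OF \<open>b > 0\<close>] by (simp add: add.commute)
  also have "\<dots> = (real t ^ 2 + real b * real t + real r * (real b - real r)) / (2 * real b)"
    using sum_div_add_one_closed_form[of b t] \<open>b > 0\<close> by (simp add: r_def field_simps)
  also have "\<dots> = (real t)^2 / (2 * real b) + real t / 2 + c"
    using \<open>b > 0\<close> by (simp add: c add_divide_distrib)
  finally show ?thesis
    using c_bounds by simp
qed

end
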